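(* Let a target $T$ be fixed at a point $(x_T,y_T)\in\mathbb{R}^2$, and consider a UAV with dynamics $\dot x=V\cos\psi$, $\dot y=V\sin\psi$, $\dot\psi=\omega$, $V>0$ constant. Let $r(t)$ be the distance from the UAV to $T$ and $\theta(t)\in[0,2\pi)$ the bearing angle. Equivalently, in these variables $\dot r=-V\cos\theta$, $\dot\theta=\omega+\frac{V\sin\theta}{r}$. Let the control input be $$\omega=\begin{cases} k\left[V\cos\!\left(\pi-\sin^{-1}\!\left(\frac{r_a}{r(t)}\right)\right)-\dot r(t)\right], & r(t)\ge r_a,\\ 0,&\text{otherwise},\end{cases}$$ with constants $k>0$ and $r_a\ge 0$. Suppose there is $t_0\ge 0$ such that $r(t_0)\ge r_a$ and $\theta(t_0)\in\left(\sin^{-1}\!\left(\frac{r_a}{r(t_0)}\right),\,2\pi-\sin^{-1}\!\left(\frac{r_a}{r(t_0)}\right)\right)$. Then $r(t)\ge r_a$ for all $t\ge t_0$.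
   Context: The bearing angle $\theta(t)\in[0,2\pi)$ is the angle measured counterclockwise from the vector pointing from the UAV's current position to $T$ to the UAV's current heading direction $(\cos\psi,\sin\psi)$. $\sin^{-1}$ is the principal arcsine. *)

theory Defs
  imports "HOL-Analysis.Analysis"
begin

definition range_to :: "real \<Rightarrow> real \<Rightarrow> real \<Rightarrow> real \<Rightarrow> real" where
  "range_to px py xT yT = sqrt ((xT - px)^2 + (yT - py)^2)"

text \<open>Bearing angle in [0, 2 pi): the counterclockwise angle from the unit vector
  pointing from the UAV (px,py) to the target (xT,yT) to the heading (cos psi, sin psi).\<close>
definition bearing :: "real \<Rightarrow> real \<Rightarrow> real \<Rightarrow> real \<Rightarrow> real \<Rightarrow> real" where
  "bearing psi px py xT yT =
     (let d = range_to px py xT yT; u1 = (xT - px) / d; u2 = (yT - py) / d in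
      THE th. 0 \<le> th \<and> th < 2 * pi \<and>
              cos psi = cos th * u1 - sin th * u2 \<and>
              sin psi = sin th * u1 + cos th * u2)"

end

theory Submission
  imports Defs
begin

text \<open>Write \<open>\<beta> = arcsin (r\<^sub>a / r)\<close>. The initial condition says that the
  margin \<open>r (cos \<beta> - cos \<theta>)\<close> is positive. As long as \<open>r > r\<^sub>a\<close>, the control law
  \<open>\<psi>' = - k V margin / r\<close> makes the margin satisfy
  \<open>margin' = margin (V / sqrt (r\<^sup>2 - r\<^sub>a\<^sup>2) - k V sin \<theta>) \<ge> - k V margin\<close>,
  so by a Gronwall argument it stays positive. Whenever \<open>r\<close> touches \<open>r\<^sub>a\<close>, the margin
  equals \<open>- r cos \<theta>\<close>, hence \<open>r' = - V cos \<theta> > 0\<close> and \<open>r\<close> cannot cross below \<open>r\<^sub>a\<close>.\<close>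

lemma eq_of_sin_cos_eq_2pi:
  fixes a b :: real
  assumes "0 \<le> a" "a < 2 * pi" "0 \<le> b" "b < 2 * pi" and "cos a = cos b" "sin a = sin b"
  shows "a = b"
proof -
  obtain n :: int where n: "a = b + 2 * pi * n"
    using sin_cos_eq_iff assms(5,6) by metis
  have "pi * (-1) < pi * n" "pi * n < pi * 1"
    using n assms(1-4) by linarith+
  then have "-1 < real_of_int n" "real_of_int n < 1"
    by (simp_all only: mult_less_cancel_left_pos[OF pi_gt_zero])
  then show ?thesis using n by simp
qed

lemma rotation_angle_cos_sin:
  fixes u1 u2 c s th :: real
  assumes u: "u1\<^sup>2 + u2\<^sup>2 = 1"
    and c: "c = cos th * u1 - sin th * u2" and s: "s = sin th * u1 + cos th * u2"
  shows "cos th = c * u1 + s * u2" and "sin th = s * u1 - c * u2"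
proof -
  have "c * u1 + s * u2 = cos th * (u1\<^sup>2 + u2\<^sup>2)" "s * u1 - c * u2 = sin th * (u1\<^sup>2 + u2\<^sup>2)"
    unfolding c s by algebra+
  then show "cos th = c * u1 + s * u2" and "sin th = s * u1 - c * u2"
    using u by simp_all
qed

lemma ex1_rotation_angle:
  fixes u1 u2 c s :: real
  assumes u: "u1\<^sup>2 + u2\<^sup>2 = 1" and cs: "c\<^sup>2 + s\<^sup>2 = 1"
  shows "\<exists>!th. 0 \<le> th \<and> th < 2 * pi \<and> c = cos th * u1 - sin th * u2 \<and> s = sin th * u1 + cos th * u2"
proof (rule ex_ex1I)
  have "(c * u1 + s * u2)\<^sup>2 + (s * u1 - c * u2)\<^sup>2 = (c\<^sup>2 + s\<^sup>2) * (u1\<^sup>2 + u2\<^sup>2)"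
    by algebra
  then obtain th where th: "0 \<le> th" "th < 2 * pi" "c * u1 + s * u2 = cos th" "s * u1 - c * u2 = sin th"
    using sincos_total_2pi u cs by (metis mult_1)
  have "cos th * u1 - sin th * u2 = c * (u1\<^sup>2 + u2\<^sup>2)" "sin th * u1 + cos th * u2 = s * (u1\<^sup>2 + u2\<^sup>2)"
    unfolding th(3,4)[symmetric] by algebra+
  then show "\<exists>th. 0 \<le> th \<and> th < 2 * pi \<and> c = cos th * u1 - sin th * u2 \<and> s = sin th * u1 + cos th * u2"
    using th(1,2) u by auto
next
  fix th th'
  assume "0 \<le> th \<and> th < 2 * pi \<and> c = cos th * u1 - sin th * u2 \<and> s = sin th * u1 + cos th * u2"
    and "0 \<le> th' \<and> th' < 2 * pi \<and> c = cos th' * u1 - sin th' * u2 \<and> s = sin th' * u1 + cos th' * u2"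
  then show "th = th'"
    using rotation_angle_cos_sin[OF u] eq_of_sin_cos_eq_2pi by metis
qed

lemma cos_bearing:
  assumes r: "0 < range_to px py xT yT"
  shows "cos (bearing psi px py xT yT) = ((xT - px) * cos psi + (yT - py) * sin psi) / range_to px py xT yT"
proof -
  define d where "d = range_to px py xT yT"
  define u1 where "u1 = (xT - px) / d"
  define u2 where "u2 = (yT - py) / d"
  have "u1\<^sup>2 + u2\<^sup>2 = ((xT - px)\<^sup>2 + (yT - py)\<^sup>2) / d\<^sup>2"
    unfolding u1_def u2_def by (simp add: power_divide add_divide_distrib)
  also have "\<dots> = 1"
    using r unfolding d_def range_to_def by fastforce
  finally have u: "u1\<^sup>2 + u2\<^sup>2 = 1" .
  have "bearing psi px py xT yT = (THE th. 0 \<le> th \<and> th < 2 * pi \<and>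
      cos psi = cos th * u1 - sin th * u2 \<and> sin psi = sin th * u1 + cos th * u2)"
    unfolding bearing_def Let_def d_def u1_def u2_def ..
  then have "cos psi = cos (bearing psi px py xT yT) * u1 - sin (bearing psi px py xT yT) * u2"
    and "sin psi = sin (bearing psi px py xT yT) * u1 + cos (bearing psi px py xT yT) * u2"
    using theI'[OF ex1_rotation_angle[OF u sin_cos_squared_add2[of psi]]] by simp_all
  then have "cos (bearing psi px py xT yT) = cos psi * u1 + sin psi * u2"
    by (rule rotation_angle_cos_sin(1)[OF u])
  then show ?thesis
    unfolding u1_def u2_def d_def by (simp add: add_divide_distrib mult.commute)
qed

lemma cos_arcsin_div:
  fixes a r :: real
  assumes "0 < r" "\<bar>a\<bar> \<le> r"
  shows "cos (arcsin (a / r)) = sqrt (r\<^sup>2 - a\<^sup>2) / r"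
proof -
  have "-1 \<le> a / r" "a / r \<le> 1"
    using assms by (simp_all add: le_divide_eq divide_le_eq abs_le_iff)
  moreover have "1 - (a / r)\<^sup>2 = (r\<^sup>2 - a\<^sup>2) / r\<^sup>2"
    using assms(1) by (simp add: field_simps power_divide)
  ultimately show ?thesis
    using assms(1) by (simp add: cos_arcsin real_sqrt_divide)
qed

lemma cos_less_cos_symmetric:
  fixes b th :: real
  assumes "0 \<le> b" "b < th" "th < 2 * pi - b"
  shows "cos th < cos b"
proof (cases "th \<le> pi")
  case True
  then show ?thesis using cos_monotone_0_pi assms by simp
next
  case False
  then have "cos (2 * pi - th) < cos b"
    using assms by (intro cos_monotone_0_pi) auto
  then show ?thesis by simp
qed

lemma stays_positive_of_deriv_ge:
  fixes f :: "real \<Rightarrow> real" and a b c :: real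
  assumes "a \<le> b" and cont: "continuous_on {a..b} f" and start: "0 < f a"
    and deriv: "\<And>u. a < u \<Longrightarrow> u < b \<Longrightarrow> 0 < f u \<Longrightarrow>
                  \<exists>D. (f has_real_derivative D) (at u) \<and> - c * f u \<le> D"
  shows "0 < f b"
proof (rule ccontr)
  assume "\<not> 0 < f b"
  define Z where "Z = {a..b} \<inter> f -` {..0}"
  have "b \<in> Z" "bdd_below Z"
    using \<open>a \<le> b\<close> \<open>\<not> 0 < f b\<close> unfolding Z_def by auto
  moreover have "closed Z"
    unfolding Z_def using cont by (rule continuous_closed_preimage) auto
  ultimately have "Inf Z \<in> Z"
    using closed_contains_Inf by blast
  define z where "z = Inf Z"
  have z: "a \<le> z" "z \<le> b" "f z \<le> 0"
    using \<open>Inf Z \<in> Z\<close> unfolding z_def Z_def by auto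
  have pos_before: "0 < f u" if "a \<le> u" "u < z" for u
  proof (rule ccontr)
    assume "\<not> 0 < f u"
    then have "u \<in> Z"
      using that z unfolding Z_def by auto
    then have "z \<le> u"
      unfolding z_def using \<open>bdd_below Z\<close> by (rule cInf_lower)
    with that show False by simp
  qed
  define G where "G u = f u * exp (c * u)" for u
  \<comment> \<open>the integrating factor turns \<open>f' \<ge> - c f\<close> into monotonicity of \<open>G\<close>\<close>
  have "G a \<le> G z"
  proof (rule DERIV_nonneg_imp_increasing_open[of a z G])
    show "continuous_on {a..z} G"
      unfolding G_def using continuous_on_subset[OF cont] z by (intro continuous_intros) auto
    fix u assume u: "a < u" "u < z"
    then obtain D where D: "(f has_real_derivative D) (at u)" "- c * f u \<le> D"
      using deriv pos_before z by force
    have "(G has_real_derivative exp (c * u) * (D + c * f u)) (at u)"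
      unfolding G_def[abs_def]
      by (rule derivative_eq_intros D refl)+ (simp add: algebra_simps)
    moreover have "0 \<le> exp (c * u) * (D + c * f u)"
      using D(2) by simp
    ultimately show "\<exists>y. (G has_real_derivative y) (at u) \<and> 0 \<le> y"
      by blast
  qed (use z in simp)
  moreover have "0 < G a" "G z \<le> 0"
    using start z by (simp_all add: G_def mult_nonpos_nonneg)
  ultimately show False
    by simp
qed

lemma first_exit_time:
  fixes f :: "real \<Rightarrow> real" and a c t :: real
  assumes "a \<le> t" and cont: "continuous_on {a..t} f" and start: "c \<le> f a" and exit: "f t < c"
  obtains s where "a \<le> s" "\<forall>u\<in>{a..s}. c \<le> f u" "f s = c"
    and "\<And>e. 0 < e \<Longrightarrow> \<exists>b\<in>{s<..<s + e}. f b < c"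
proof -
  define B where "B = {a..t} \<inter> f -` {..<c}"
  have "t \<in> B" "bdd_below B"
    using \<open>a \<le> t\<close> exit unfolding B_def by auto
  then have "B \<noteq> {}" by auto
  define s where "s = Inf B"
  have s_range: "a \<le> s" "s \<le> t"
    using cInf_lower[OF \<open>t \<in> B\<close> \<open>bdd_below B\<close>] cInf_greatest[OF \<open>B \<noteq> {}\<close>, of a]
    unfolding s_def B_def by auto
  have above_before: "{a..<s} \<subseteq> {a..t} \<inter> f -` {c..}"
  proof
    fix u assume u: "u \<in> {a..<s}"
    show "u \<in> {a..t} \<inter> f -` {c..}"
    proof (rule ccontr)
      assume "u \<notin> {a..t} \<inter> f -` {c..}"
      then have "u \<in> B"
        using u s_range unfolding B_def by auto
      then have "s \<le> u"
        unfolding s_def using \<open>bdd_below B\<close> by (rule cInf_lower)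
      with u show False by simp
    qed
  qed
  have above: "\<forall>u\<in>{a..s}. c \<le> f u"
  proof (cases "a < s")
    case True
    have "closed ({a..t} \<inter> f -` {c..})"
      by (rule continuous_closed_preimage[OF cont]) auto
    then show ?thesis
      using closure_minimal[OF above_before] True by auto
  qed (use start s_range in auto)
  have "closed ({a..t} \<inter> f -` {..c})"
    by (rule continuous_closed_preimage[OF cont]) auto
  moreover have "s \<in> closure B"
    unfolding s_def using \<open>B \<noteq> {}\<close> \<open>bdd_below B\<close> by (rule closure_contains_Inf)
  moreover have "B \<subseteq> {a..t} \<inter> f -` {..c}"
    unfolding B_def by auto
  ultimately have "f s \<le> c"
    using closure_minimal by blast
  with above s_range have "f s = c"
    by (meson atLeastAtMost_iff order.antisym order.refl)
  moreover have "\<exists>b\<in>{s<..<s + e}. f b < c" if "0 < e" for e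
  proof -
    obtain b where b: "b \<in> B" "b < s + e"
      using cInf_less_iff[OF \<open>B \<noteq> {}\<close> \<open>bdd_below B\<close>, of "s + e"] \<open>0 < e\<close> unfolding s_def by auto
    have "s \<le> b"
      unfolding s_def using b(1) \<open>bdd_below B\<close> by (rule cInf_lower)
    moreover have "b \<noteq> s"
      using b(1) \<open>f s \<le> c\<close> above s_range unfolding B_def by force
    ultimately show ?thesis
      using b unfolding B_def by auto
  qed
  ultimately show ?thesis
    using that s_range above by blast
qed

lemma stays_above_of_deriv_pos_at_level:
  fixes f :: "real \<Rightarrow> real" and a c t :: real
  assumes cont: "continuous_on {a..} f" and start: "c \<le> f a"
    and push: "\<And>s. a \<le> s \<Longrightarrow> \<forall>u\<in>{a..s}. c \<le> f u \<Longrightarrow> f s = c \<Longrightarrow>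
                 \<exists>D>0. (f has_real_derivative D) (at s within {a..})"
    and "a \<le> t"
  shows "c \<le> f t"
proof (rule ccontr)
  assume "\<not> c \<le> f t"
  moreover have "continuous_on {a..t} f"
    using continuous_on_subset[OF cont] by auto
  ultimately obtain s where s: "a \<le> s" "\<forall>u\<in>{a..s}. c \<le> f u" "f s = c"
    and leaves: "\<And>e. 0 < e \<Longrightarrow> \<exists>b\<in>{s<..<s + e}. f b < c"
    using first_exit_time[of a t f c] \<open>a \<le> t\<close> start by (metis not_le)
  obtain D where "D > 0" "(f has_real_derivative D) (at s within {a..})"
    using push s by blast
  then obtain d where d: "d > 0" "\<forall>h>0. s + h \<in> {a..} \<longrightarrow> h < d \<longrightarrow> f s < f (s + h)"
    using has_real_derivative_pos_inc_right by blast
  obtain b where "s < b" "b < s + d" "f b < c"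
    using leaves[OF d(1)] by auto
  then show False
    using d(2)[rule_format, of "b - s"] s by simp
qed

lemma at_within_atLeast: "a < t \<Longrightarrow> at t within {a..} = at (t::real)"
  by (intro at_within_interior) simp

locale uav_guidance =
  fixes x y psi :: "real \<Rightarrow> real" and xT yT V k ra :: real
  assumes V_pos: "0 < V" and k_pos: "0 < k" and ra_pos: "0 < ra"
    and dx: "\<forall>t\<ge>0. (x has_real_derivative V * cos (psi t)) (at t within {0..})"
    and dy: "\<forall>t\<ge>0. (y has_real_derivative V * sin (psi t)) (at t within {0..})"
    and dpsi: "\<forall>t\<ge>0. (psi has_real_derivative
               (if range_to (x t) (y t) xT yT \<ge> ra
                then k * (V * cos (pi - arcsin (ra / range_to (x t) (y t) xT yT))
                          - vector_derivative (\<lambda>s. range_to (x s) (y s) xT yT) (at t within {0..}))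
                else 0)) (at t within {0..})"
begin

text \<open>With \<open>r = rdist t\<close>, bearing \<open>\<theta>\<close> and \<open>\<beta> = arcsin (r\<^sub>a / r)\<close>:
  \<open>approach t = r cos \<theta>\<close>, \<open>lateral t = - r sin \<theta>\<close>, \<open>tangent t = r cos \<beta>\<close> (the length of
  the tangent from the UAV to the circle of radius \<open>r\<^sub>a\<close>), so \<open>margin t = r (cos \<beta> - cos \<theta>)\<close>.\<close>

definition rdist :: "real \<Rightarrow> real"
  where "rdist t = range_to (x t) (y t) xT yT"

definition approach :: "real \<Rightarrow> real"
  where "approach t = (xT - x t) * cos (psi t) + (yT - y t) * sin (psi t)"

definition lateral :: "real \<Rightarrow> real"
  where "lateral t = (yT - y t) * cos (psi t) - (xT - x t) * sin (psi t)"

definition tangent :: "real \<Rightarrow> real"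
  where "tangent t = sqrt ((rdist t)\<^sup>2 - ra\<^sup>2)"

definition margin :: "real \<Rightarrow> real"
  where "margin t = tangent t - approach t"

lemma rdist_sq: "(rdist t)\<^sup>2 = (xT - x t)\<^sup>2 + (yT - y t)\<^sup>2"
  by (simp add: rdist_def range_to_def)

lemma abs_lateral_le_rdist: "\<bar>lateral t\<bar> \<le> rdist t"
proof -
  have "(approach t)\<^sup>2 + (lateral t)\<^sup>2 = ((xT - x t)\<^sup>2 + (yT - y t)\<^sup>2) * ((sin (psi t))\<^sup>2 + (cos (psi t))\<^sup>2)"
    unfolding approach_def lateral_def by algebra
  then have "(approach t)\<^sup>2 + (lateral t)\<^sup>2 = (rdist t)\<^sup>2"
    by (simp add: rdist_sq)
  then have "(lateral t)\<^sup>2 \<le> (rdist t)\<^sup>2"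
    using zero_le_power2[of "approach t"] by linarith
  then show ?thesis
    using real_sqrt_le_mono[of "(lateral t)\<^sup>2" "(rdist t)\<^sup>2"] by (simp add: rdist_def range_to_def)
qed

lemma continuous_on_state:
  shows "continuous_on {0..} x" and "continuous_on {0..} y" and "continuous_on {0..} psi"
  using dx dy dpsi
  by (meson DERIV_continuous atLeast_iff continuous_on_eq_continuous_within)+

lemma continuous_on_rdist: "continuous_on {0..} rdist"
  unfolding rdist_def[abs_def] range_to_def using continuous_on_state
  by (intro continuous_intros)

lemma continuous_on_margin: "continuous_on {0..} margin"
  unfolding margin_def[abs_def] tangent_def approach_def using continuous_on_state continuous_on_rdist
  by (intro continuous_intros)

lemma rdist_has_derivative:
  assumes "0 \<le> t" "0 < rdist t"
  shows "(rdist has_real_derivative - V * approach t / rdist t) (at t within {0..})"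
proof -
  have pos: "0 < (xT - x t)\<^sup>2 + (yT - y t)\<^sup>2"
    using assms(2) by (simp add: rdist_def range_to_def)
  have "((\<lambda>s. (xT - x s)\<^sup>2 + (yT - y s)\<^sup>2) has_real_derivative
      2 * (xT - x t) * - (V * cos (psi t)) + 2 * (yT - y t) * - (V * sin (psi t))) (at t within {0..})"
    using dx dy assms(1) by (auto intro!: derivative_eq_intros simp: algebra_simps)
  from DERIV_chain2[OF DERIV_real_sqrt[OF pos] this]
  have "((\<lambda>s. sqrt ((xT - x s)\<^sup>2 + (yT - y s)\<^sup>2)) has_real_derivative
      inverse (sqrt ((xT - x t)\<^sup>2 + (yT - y t)\<^sup>2)) / 2 *
      (2 * (xT - x t) * - (V * cos (psi t)) + 2 * (yT - y t) * - (V * sin (psi t)))) (at t within {0..})"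
    by (simp add: o_def)
  then show ?thesis
    unfolding rdist_def[abs_def] range_to_def approach_def
    by (rule DERIV_cong) (unfold divide_inverse, algebra)
qed

lemma tangent_eq_rdist_cos:
  assumes "ra \<le> rdist t"
  shows "tangent t = rdist t * cos (arcsin (ra / rdist t))"
  using assms ra_pos cos_arcsin_div[of "rdist t" ra] unfolding tangent_def by simp

lemma psi_has_derivative:
  assumes "0 < t" "ra < rdist t"
  shows "(psi has_real_derivative - k * V * margin t / rdist t) (at t)"
proof -
  have r: "0 < rdist t"
    using assms(2) ra_pos by linarith
  have at_t: "at t within {0..} = at t"
    using assms(1) by (rule at_within_atLeast)
  have "vector_derivative rdist (at t within {0..}) = - V * approach t / rdist t"
    using rdist_has_derivative[of t] assms(1) r at_t
    by (simp add: has_real_derivative_iff_has_vector_derivative vector_derivative_at)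
  moreover have "(\<lambda>s. range_to (x s) (y s) xT yT) = rdist"
    by (simp add: rdist_def fun_eq_iff)
  ultimately have "(psi has_real_derivative
      k * (V * cos (pi - arcsin (ra / rdist t)) - - V * approach t / rdist t)) (at t)"
    using dpsi[rule_format, of t] assms at_t unfolding rdist_def[symmetric] by simp
  moreover have "cos (pi - arcsin (ra / rdist t)) = - (tangent t / rdist t)"
    using tangent_eq_rdist_cos[of t] assms(2) r by simp
  ultimately show ?thesis
    by (simp add: margin_def diff_divide_distrib algebra_simps)
qed

lemma margin_has_derivative:
  assumes "0 < t" "ra < rdist t"
  shows "(margin has_real_derivative margin t * (V / tangent t + k * V * lateral t / rdist t)) (at t)"
proof -
  have r: "0 < rdist t"
    using assms(2) ra_pos by linarith
  have inside: "0 < (rdist t)\<^sup>2 - ra\<^sup>2"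
    using assms(2) ra_pos by (simp add: power_strict_mono)
  have at_t: "at t within {0..} = at t"
    using assms(1) by (rule at_within_atLeast)
  have "(rdist has_real_derivative - V * approach t / rdist t) (at t)"
    using rdist_has_derivative[of t] assms(1) r at_t by simp
  then have "((\<lambda>s. (rdist s)\<^sup>2 - ra\<^sup>2) has_real_derivative - 2 * V * approach t) (at t)"
    using r by (auto intro!: derivative_eq_intros)
  from DERIV_chain2[OF DERIV_real_sqrt[OF inside] this]
  have "(tangent has_real_derivative inverse (tangent t) / 2 * (- 2 * V * approach t)) (at t)"
    unfolding tangent_def[abs_def] by simp
  then have d_tangent: "(tangent has_real_derivative - V * approach t / tangent t) (at t)"
    by (rule DERIV_cong) (simp add: inverse_eq_divide)
  have "(x has_real_derivative V * cos (psi t)) (at t)" "(y has_real_derivative V * sin (psi t)) (at t)"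
    using dx[rule_format, of t] dy[rule_format, of t] assms(1) at_t by simp_all
  note d_state = this psi_has_derivative[OF assms]
  have "(approach has_real_derivative
      - V * ((sin (psi t))\<^sup>2 + (cos (psi t))\<^sup>2) + lateral t * (- k * V * margin t / rdist t)) (at t)"
    unfolding approach_def[abs_def]
    by (rule derivative_eq_intros refl d_state)+ (unfold lateral_def, algebra)
  then have "(approach has_real_derivative - V + lateral t * (- k * V * margin t / rdist t)) (at t)"
    by simp
  with d_tangent have "(margin has_real_derivative
      - V * approach t / tangent t - (- V + lateral t * (- k * V * margin t / rdist t))) (at t)"
    unfolding margin_def[abs_def] by (rule DERIV_diff)
  moreover have "0 < tangent t"
    using inside by (simp add: tangent_def)
  ultimately show ?thesis
    by (simp add: margin_def diff_divide_distrib algebra_simps)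
qed

lemma margin_derivative_ge:
  assumes "0 < t" "ra < rdist t" "0 < margin t"
  shows "\<exists>D. (margin has_real_derivative D) (at t) \<and> - (k * V) * margin t \<le> D"
proof -
  have r: "0 < rdist t"
    using assms(2) ra_pos by linarith
  have "- 1 \<le> lateral t / rdist t"
    using abs_lateral_le_rdist[of t] r by (simp add: le_divide_eq abs_le_iff)
  then have "0 \<le> k * V * (lateral t / rdist t + 1)"
    using V_pos k_pos by simp
  moreover have "0 \<le> V / tangent t"
    using V_pos assms(2) ra_pos by (intro divide_nonneg_nonneg) (simp_all add: tangent_def power_mono)
  ultimately have "0 \<le> V / tangent t + k * V * (lateral t / rdist t + 1)"
    by linarith
  then have "0 \<le> margin t * (V / tangent t + k * V * (lateral t / rdist t + 1))"
    using assms(3) by simp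
  moreover have "margin t * (V / tangent t + k * V * lateral t / rdist t)
      = - (k * V) * margin t + margin t * (V / tangent t + k * V * (lateral t / rdist t + 1))"
    by (simp add: algebra_simps)
  ultimately have "- (k * V) * margin t \<le> margin t * (V / tangent t + k * V * lateral t / rdist t)"
    by linarith
  then show ?thesis
    using margin_has_derivative[OF assms(1,2)] by blast
qed

lemma margin_pos_of_bearing:
  assumes "ra \<le> rdist t"
    and "arcsin (ra / rdist t) < bearing (psi t) (x t) (y t) xT yT"
    and "bearing (psi t) (x t) (y t) xT yT < 2 * pi - arcsin (ra / rdist t)"
  shows "0 < margin t"
proof -
  have r: "0 < rdist t"
    using assms(1) ra_pos by linarith
  have "0 \<le> arcsin (ra / rdist t)"
    using assms(1) ra_pos r by (intro arcsin_nonneg) simp_all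
  then have "cos (bearing (psi t) (x t) (y t) xT yT) < cos (arcsin (ra / rdist t))"
    using assms(2,3) by (rule cos_less_cos_symmetric)
  then have "approach t / rdist t < tangent t / rdist t"
    using cos_bearing[of "x t" "y t" xT yT "psi t"] tangent_eq_rdist_cos[OF assms(1)] r
    by (simp add: approach_def rdist_def)
  then show ?thesis
    using r by (simp add: margin_def divide_less_cancel)
qed

lemma rdist_deriv_pos_at_boundary:
  assumes "0 \<le> t" "rdist t = ra" "0 < margin t"
  shows "\<exists>D>0. (rdist has_real_derivative D) (at t within {0..})"
proof -
  have "tangent t = 0"
    using assms(2) by (simp add: tangent_def)
  then have "approach t < 0"
    using assms(3) by (simp add: margin_def)
  then have "0 < - V * approach t / rdist t"
    using V_pos ra_pos assms(2) by (simp add: mult_pos_neg divide_neg_pos)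
  moreover have "(rdist has_real_derivative - V * approach t / rdist t) (at t within {0..})"
    using rdist_has_derivative[OF assms(1)] assms(2) ra_pos by simp
  ultimately show ?thesis
    by blast
qed

lemma rdist_gt_of_margin_pos:
  assumes "0 \<le> t0" "t0 < u" "\<forall>s\<in>{t0..u}. ra \<le> rdist s" "0 < margin u"
  shows "ra < rdist u"
proof (rule ccontr)
  assume "\<not> ra < rdist u"
  moreover have "ra \<le> rdist u"
    using assms(2,3) by simp
  ultimately have "rdist u = ra"
    by linarith
  then obtain D where "D > 0" "(rdist has_real_derivative D) (at u)"
    using rdist_deriv_pos_at_boundary[of u] assms at_within_atLeast[of 0 u] by auto
  then obtain d where d: "d > 0" "\<And>h. 0 < h \<Longrightarrow> h < d \<Longrightarrow> rdist (u - h) < rdist u"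
    using DERIV_pos_inc_left by blast
  define h where "h = min (d / 2) (u - t0)"
  have "0 < h" "h < d" "u - h \<in> {t0..u}"
    using d(1) assms(2) by (auto simp: h_def)
  then show False
    using d(2)[of h] assms(3) \<open>rdist u = ra\<close> by fastforce
qed

lemma margin_pos_while_outside:
  assumes "0 \<le> t0" "0 < margin t0" "t0 \<le> t" "\<forall>s\<in>{t0..t}. ra \<le> rdist s"
  shows "0 < margin t"
proof (rule stays_positive_of_deriv_ge[where f = margin and a = t0 and b = t and c = "k * V"])
  show "continuous_on {t0..t} margin"
    by (rule continuous_on_subset[OF continuous_on_margin]) (use assms(1) in auto)
next
  fix u assume u: "t0 < u" "u < t" "0 < margin u"
  have "\<forall>s\<in>{t0..u}. ra \<le> rdist s"
    using assms(4) u(2) by simp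
  then have "ra < rdist u"
    using rdist_gt_of_margin_pos[OF assms(1) u(1)] u(3) by blast
  moreover have "0 < u"
    using assms(1) u(1) by linarith
  ultimately show "\<exists>D. (margin has_real_derivative D) (at u) \<and> - (k * V) * margin u \<le> D"
    using margin_derivative_ge u(3) by blast
qed (simp_all add: assms(2,3))

lemma rdist_stays_outside:
  assumes "0 \<le> t0" "ra \<le> rdist t0" "0 < margin t0" "t0 \<le> t"
  shows "ra \<le> rdist t"
proof (rule stays_above_of_deriv_pos_at_level[where f = rdist and a = t0 and c = ra and t = t])
  show "continuous_on {t0..} rdist"
    by (rule continuous_on_subset[OF continuous_on_rdist]) (use assms(1) in auto)
next
  fix s assume s: "t0 \<le> s" "\<forall>u\<in>{t0..s}. ra \<le> rdist u" "rdist s = ra"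
  have "0 < margin s"
    using margin_pos_while_outside[OF assms(1,3) s(1,2)] .
  moreover have "0 \<le> s"
    using assms(1) s(1) by linarith
  ultimately obtain D where "D > 0" "(rdist has_real_derivative D) (at s within {0..})"
    using rdist_deriv_pos_at_boundary s(3) by blast
  moreover have "{t0..} \<subseteq> {0..}"
    using assms(1) by auto
  ultimately show "\<exists>D>0. (rdist has_real_derivative D) (at s within {t0..})"
    using DERIV_subset by blast
qed (simp_all add: assms(2,4))

end

theorem lemma2:
  fixes x y psi :: "real \<Rightarrow> real" and xT yT V k ra t0 :: real
  assumes V_pos: "V > 0" and k_pos: "k > 0" and ra_nonneg: "ra \<ge> 0" and t0_nonneg: "t0 \<ge> 0"
    and dx: "\<forall>t\<ge>0. (x has_real_derivative V * cos (psi t)) (at t within {0..})"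
    and dy: "\<forall>t\<ge>0. (y has_real_derivative V * sin (psi t)) (at t within {0..})"
    and dpsi: "\<forall>t\<ge>0. (psi has_real_derivative
               (if range_to (x t) (y t) xT yT \<ge> ra
                then k * (V * cos (pi - arcsin (ra / range_to (x t) (y t) xT yT))
                          - vector_derivative (\<lambda>s. range_to (x s) (y s) xT yT) (at t within {0..}))
                else 0)) (at t within {0..})"
    and r0: "range_to (x t0) (y t0) xT yT \<ge> ra"
    and th0_lo: "arcsin (ra / range_to (x t0) (y t0) xT yT) < bearing (psi t0) (x t0) (y t0) xT yT"
    and th0_hi: "bearing (psi t0) (x t0) (y t0) xT yT < 2 * pi - arcsin (ra / range_to (x t0) (y t0) xT yT)"
  shows "\<forall>t\<ge>t0. range_to (x t) (y t) xT yT \<ge> ra"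
proof (cases "ra = 0")
  case True
  then show ?thesis by (simp add: range_to_def)
next
  case False
  interpret uav_guidance x y psi xT yT V k ra
    using V_pos k_pos ra_nonneg False dx dy dpsi by unfold_locales auto
  have "0 < margin t0"
    using r0 th0_lo th0_hi by (intro margin_pos_of_bearing) (simp_all add: rdist_def)
  then show ?thesis
    using rdist_stays_outside t0_nonneg r0 by (simp add: rdist_def)
qed

end
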